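(* Assume: (1) each $h_i$ is measurable in $\xi_i$ and continuously differentiable in $x_i$ for every fixed $x_{-i}\in X_{-i}$, $\xi_i\in\Xi_i$; (2) each $X_i$ is compact and convex and $h_i(\cdot,x_{-i},\xi_i)$ is convex for every $x_{-i},\xi_i$; (3) for each $i$, every distribution $\mathbb{Q}_i$ in agent $i$'s ambiguity set belongs to $\mathcal{M}(\Xi_i)$ and there is $a_i>1$ with $\mathbb{E}_{\mathbb{Q}_i}[\exp(\|\xi_i\|^{a_i})]<\infty$; (4) for every $i\in\mathcal{N}$ and $j\in\{1,\dots,n\}$ there is $L_{i,j}\ge0$ with $\big|\frac{\partial h_i(x,\xi_i)}{\partial x_i^{(j)}}-\frac{\partial h_i(x,\xi_i')}{\partial x_i^{(j)}}\big|\le L_{i,j}\|\xi_i-\xi_i'\|$ for all $x\in X$, $\xi_i,\xi_i'\in\Xi_i$. Let $\epsilon_i(K_i,\beta_i)\ge0$ be the radius used by agent $i$ and $\mathcal{W}_K(\hat{\mathbb{P}}_K)=\prod_{i=1}^N\mathbb{B}_{\epsilon_i(K_i,\beta_i)}(\hat{\mathbb{P}}_{K_i})$. Then for any $x$ in an open set $V\subset X$ and any $q_K=\mathrm{col}((q_{K_i})_i)\in\mathcal{W}_K(\hat{\mathbb{P}}_K)$, $$\|F_{q_K}(x)-F_{\mathbb{P}}(x)\|^2\le\rho_K:=\sum_{i=1}^N\sum_{j=1}^{n}L_{i,j}^2\big[\epsilon_i(K_i,\beta_i)+d_W(\hat{\mathbb{P}}_{K_i},\mathbb{P}_i)\big]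^2.$$
   Context: Agents $i\in\mathcal{N}=\{1,\dots,N\}$ choose $x_i=\mathrm{col}(x_i^{(1)},\dots,x_i^{(n)})\in X_i\subseteq\mathbb{R}^n$; $X=\prod_iX_i$, $x=\mathrm{col}((x_i)_i)$, $x_{-i}$ the others' decisions, $X_{-i}=\prod_{j\ne i}X_j$. Agent $i$'s cost is $h_i:\mathbb{R}^{nN}\times\Xi_i\to\mathbb{R}$ with uncertainty $\xi_i\in\Xi_i\subseteq\mathbb{R}^p$ whose true distribution is $\mathbb{P}_i$; $\mathbb{P}=\mathrm{col}((\mathbb{P}_i)_i)$. $\|\cdot\|$ is the Euclidean norm; $\mathcal{M}(\Xi_i)$ is the set of distributions on $\Xi_i$ with finite first moment; $d_W(\mathbb{Q}_1,\mathbb{Q}_2)=\inf_\Pi\int\|\xi_1-\xi_2\|\Pi(d\xi_1,d\xi_2)$ over couplings $\Pi$ of $\mathbb{Q}_1,\mathbb{Q}_2$. From $K_i$ samples $\xi_i^{(1)},\dots,\xi_i^{(K_i)}$, $\hat{\mathbb{P}}_{K_i}=\frac1{K_i}\sum_k\delta_{\xi_i^{(k)}}$, and $\mathbb{B}_\epsilon(\hat{\mathbb{P}}_{K_i})=\{\mathbb{Q}\in\mathcal{M}(\Xi_i):d_W(\hat{\mathbb{P}}_{K_i},\mathbb{Q})\le\epsilon\}$ is agent $i$'s ambiguity set. For a collection $q=\mathrm{col}((q_i)_i)$ of distributions, $F_q(x)=\mathrm{col}((\nabla_{x_i}\mathbb{E}_{q_i}[h_i(x_i,x_{-i},\xi_i)])_{i\in\mathcal{N}})$.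 *)

theory Defs
  imports "HOL-Probability.Probability"
begin

text \<open>Joint decisions are x :: real^'n^'i, x $ i = decision of agent i in R^n.
  Uncertainties live in a Euclidean space 'x (= R^p).\<close>

definition upd :: "real^'n^'i \<Rightarrow> 'i \<Rightarrow> real^'n \<Rightarrow> real^'n^'i" where
  "upd x i y = (\<chi> k. if k = i then y else x $ k)"

definition pderiv_ij :: "(real^'n^'i \<Rightarrow> real) \<Rightarrow> 'i \<Rightarrow> 'n \<Rightarrow> real^'n^'i \<Rightarrow> real" where
  "pderiv_ij g i j x = deriv (\<lambda>t. g (upd x i (x $ i + t *\<^sub>R axis j 1))) 0"

definition C1_on_UNIV :: "(real^'n \<Rightarrow> real) \<Rightarrow> bool" where
  "C1_on_UNIV f \<longleftrightarrow> (\<exists>D. (\<forall>y. (f has_derivative (\<lambda>v. D y \<bullet> v)) (at y)) \<and> continuous_on UNIV D)"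

definition distrs_M :: "'x::euclidean_space set \<Rightarrow> 'x measure set" where
  "distrs_M Xi = {Q. sets Q = sets borel \<and> prob_space Q \<and> Xi \<in> sets borel \<and>
                     measure Q Xi = 1 \<and> integrable Q norm}"

definition couplings :: "'x::euclidean_space measure \<Rightarrow> 'x measure \<Rightarrow> ('x \<times> 'x) measure set" where
  "couplings Q1 Q2 = {Pi. sets Pi = sets borel \<and> distr Pi borel fst = Q1 \<and> distr Pi borel snd = Q2}"

definition d_W :: "'x::euclidean_space measure \<Rightarrow> 'x measure \<Rightarrow> real" where
  "d_W Q1 Q2 = enn2real (INF Pi \<in> couplings Q1 Q2. \<integral>\<^sup>+ p. ennreal (norm (fst p - snd p)) \<partial>Pi)"

definition empirical :: "nat \<Rightarrow> (nat \<Rightarrow> 'x::euclidean_space) \<Rightarrow> 'x measure" where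
  "empirical K s = distr (uniform_count_measure {..<K}) borel s"

definition wball :: "'x::euclidean_space set \<Rightarrow> real \<Rightarrow> 'x measure \<Rightarrow> 'x measure set" where
  "wball Xi eps P = {Q \<in> distrs_M Xi. d_W P Q \<le> eps}"

definition Fmap :: "('i \<Rightarrow> real^'n^'i \<Rightarrow> 'x::euclidean_space \<Rightarrow> real) \<Rightarrow> ('i \<Rightarrow> 'x measure)
                     \<Rightarrow> real^'n^'i \<Rightarrow> real^'n^'i" where
  "Fmap h q x = (\<chi> i. \<chi> j. pderiv_ij (\<lambda>z. \<integral>\<xi>. h i z \<xi> \<partial>(q i)) i j x)"

end

theory Submission
  imports Defs
begin

(* Differentiating under the integral sign shows that the (i,j) component of F_Q(x) is the
   integral over Q of one function f of xi, the partial derivative of h_i(., xi) at x in the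
   direction x_i^(j); the domination needed for this comes from the Lipschitz dependence of
   that partial derivative on xi together with the finite first moment of Q. Since f is
   L_ij-Lipschitz on Xi_i, integrating |f xi - f xi'| against any coupling of Q and Q' bounds
   |E_Q f - E_Q' f| by L_ij d_W(Q, Q'). Comparing q_i and P_i through the empirical
   distribution bounds the component by L_ij (eps_i + d_W(P_K_i, P_i)), and summing squares
   gives rho_K. *)

lemma distrs_M_AE_mem:
  assumes "Q \<in> distrs_M S"
  shows "AE \<xi> in Q. \<xi> \<in> S"
  using assms by (intro prob_space.AE_prob_1) (auto simp: distrs_M_def)

lemma lipschitz_on_abs_le:
  fixes f :: "'a::real_normed_vector \<Rightarrow> real"
  assumes lip: "L-lipschitz_on S f" and "\<xi> \<in> S" and "\<xi>\<^sub>0 \<in> S"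
  shows "\<bar>f \<xi>\<bar> \<le> \<bar>f \<xi>\<^sub>0\<bar> + L * (norm \<xi> + norm \<xi>\<^sub>0)"
proof -
  have "\<bar>f \<xi> - f \<xi>\<^sub>0\<bar> \<le> L * norm (\<xi> - \<xi>\<^sub>0)"
    using lipschitz_on_normD[OF lip \<open>\<xi> \<in> S\<close> \<open>\<xi>\<^sub>0 \<in> S\<close>] by simp
  also have "\<dots> \<le> L * (norm \<xi> + norm \<xi>\<^sub>0)"
    using lipschitz_on_nonneg[OF lip] by (intro mult_left_mono norm_triangle_ineq4)
  finally show ?thesis
    by linarith
qed

lemma integrable_lipschitz_on_distrs_M:
  fixes f :: "'x::euclidean_space \<Rightarrow> real"
  assumes Q: "Q \<in> distrs_M S" and f: "f \<in> borel_measurable borel" and lip: "L-lipschitz_on S f"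
  shows "integrable Q f"
proof -
  interpret prob_space Q using Q by (simp add: distrs_M_def)
  have sets_Q: "sets Q = sets borel" and norm_Q: "integrable Q norm"
    using Q by (auto simp: distrs_M_def)
  obtain \<xi>\<^sub>0 where \<xi>\<^sub>0: "\<xi>\<^sub>0 \<in> S"
    using Q by (force simp: distrs_M_def)
  show ?thesis
  proof (rule Bochner_Integration.integrable_bound)
    show "integrable Q (\<lambda>\<xi>. \<bar>f \<xi>\<^sub>0\<bar> + L * (norm \<xi> + norm \<xi>\<^sub>0))"
      using norm_Q by (intro Bochner_Integration.integrable_add integrable_mult_right) auto
    show "f \<in> borel_measurable Q"
      using f by (simp add: measurable_cong_sets[OF sets_Q refl])
    show "AE \<xi> in Q. norm (f \<xi>) \<le> norm (\<bar>f \<xi>\<^sub>0\<bar> + L * (norm \<xi> + norm \<xi>\<^sub>0))"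
      using distrs_M_AE_mem[OF Q]
      by eventually_elim (use lipschitz_on_abs_le[OF lip _ \<xi>\<^sub>0] lipschitz_on_nonneg[OF lip] in force)
  qed
qed

lemma empirical_in_distrs_M:
  fixes s :: "nat \<Rightarrow> 'x::euclidean_space"
  assumes "K > 0" and s: "\<And>k. k < K \<Longrightarrow> s k \<in> S" and "S \<in> sets borel"
  shows "empirical K s \<in> distrs_M S"
proof -
  let ?U = "uniform_count_measure {..<K}"
  interpret U: prob_space ?U
    using \<open>K > 0\<close> by (intro prob_space_uniform_count_measure) auto
  have s_meas: "s \<in> ?U \<rightarrow>\<^sub>M borel"
    by (simp add: measurable_def space_uniform_count_measure sets_uniform_count_measure)
  have "measure (empirical K s) S = measure ?U (s -` S \<inter> space ?U)"
    unfolding empirical_def using s_meas \<open>S \<in> sets borel\<close> by (rule measure_distr)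
  also have "s -` S \<inter> space ?U = space ?U"
    using s by (auto simp: space_uniform_count_measure)
  finally have "measure (empirical K s) S = 1"
    by (simp add: U.prob_space)
  moreover have "integrable ?U (\<lambda>k. norm (s k))"
    by (rule U.integrable_const_bound[where B="\<Sum>k<K. norm (s k)"])
      (auto intro!: AE_I2 member_le_sum simp: space_uniform_count_measure
        measurable_def sets_uniform_count_measure)
  ultimately show ?thesis
    using U.prob_space_distr[OF s_meas] s_meas \<open>S \<in> sets borel\<close>
    by (simp add: distrs_M_def empirical_def integrable_distr_eq)
qed

lemma couplingsD:
  fixes Q\<^sub>1 Q\<^sub>2 :: "'x::euclidean_space measure"
  assumes "\<gamma> \<in> couplings Q\<^sub>1 Q\<^sub>2"
  shows "fst \<in> \<gamma> \<rightarrow>\<^sub>M borel" "snd \<in> \<gamma> \<rightarrow>\<^sub>M borel"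
    and "Q\<^sub>1 = distr \<gamma> borel fst" "Q\<^sub>2 = distr \<gamma> borel snd"
proof -
  have sets_\<gamma>: "sets \<gamma> = sets borel"
    using assms by (simp add: couplings_def)
  show "fst \<in> \<gamma> \<rightarrow>\<^sub>M borel" "snd \<in> \<gamma> \<rightarrow>\<^sub>M borel"
    unfolding measurable_cong_sets[OF sets_\<gamma> refl] borel_prod[symmetric] by auto
  show "Q\<^sub>1 = distr \<gamma> borel fst" "Q\<^sub>2 = distr \<gamma> borel snd"
    using assms by (auto simp: couplings_def)
qed

lemma pair_measure_in_couplings:
  fixes Q\<^sub>1 Q\<^sub>2 :: "'x::euclidean_space measure"
  assumes Q\<^sub>1: "Q\<^sub>1 \<in> distrs_M S" and Q\<^sub>2: "Q\<^sub>2 \<in> distrs_M S"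
  shows "Q\<^sub>1 \<Otimes>\<^sub>M Q\<^sub>2 \<in> couplings Q\<^sub>1 Q\<^sub>2"
proof -
  have sets: "sets Q\<^sub>1 = sets borel" "sets Q\<^sub>2 = sets borel"
    using Q\<^sub>1 Q\<^sub>2 by (auto simp: distrs_M_def)
  interpret pair_prob_space Q\<^sub>1 Q\<^sub>2
    using Q\<^sub>1 Q\<^sub>2 by (simp add: distrs_M_def pair_prob_space_def pair_sigma_finite_def
        prob_space_imp_sigma_finite)
  have "distr (Q\<^sub>1 \<Otimes>\<^sub>M Q\<^sub>2) borel fst = distr (Q\<^sub>1 \<Otimes>\<^sub>M Q\<^sub>2) Q\<^sub>1 fst"
    "distr (Q\<^sub>1 \<Otimes>\<^sub>M Q\<^sub>2) borel snd = distr (Q\<^sub>1 \<Otimes>\<^sub>M Q\<^sub>2) Q\<^sub>2 snd"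
    using sets by (auto intro!: distr_cong)
  moreover have "sets (Q\<^sub>1 \<Otimes>\<^sub>M Q\<^sub>2) = sets borel"
    unfolding sets_pair_measure_cong[OF sets] by (simp only: borel_prod)
  moreover have "distr (Q\<^sub>1 \<Otimes>\<^sub>M Q\<^sub>2) Q\<^sub>2 snd = Q\<^sub>2"
  proof (rule measure_eqI)
    fix A
    assume "A \<in> sets (distr (Q\<^sub>1 \<Otimes>\<^sub>M Q\<^sub>2) Q\<^sub>2 snd)"
    then have A: "A \<in> sets Q\<^sub>2"
      by simp
    then have "emeasure (distr (Q\<^sub>1 \<Otimes>\<^sub>M Q\<^sub>2) Q\<^sub>2 snd) A = emeasure (Q\<^sub>1 \<Otimes>\<^sub>M Q\<^sub>2) (space Q\<^sub>1 \<times> A)"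
      by (auto simp: emeasure_distr space_pair_measure dest: sets.sets_into_space
          intro!: arg_cong2[where f=emeasure])
    with A show "emeasure (distr (Q\<^sub>1 \<Otimes>\<^sub>M Q\<^sub>2) Q\<^sub>2 snd) A = emeasure Q\<^sub>2 A"
      using M2.emeasure_pair_measure_Times[of "space Q\<^sub>1" Q\<^sub>1 A] by (simp add: M1.emeasure_space_1)
  qed simp
  ultimately show ?thesis
    by (simp add: couplings_def M2.distr_pair_fst)
qed

definition transport_cost :: "('x::euclidean_space \<times> 'x) measure \<Rightarrow> ennreal" where
  "transport_cost \<gamma> = (\<integral>\<^sup>+ p. ennreal (norm (fst p - snd p)) \<partial>\<gamma>)"

lemma d_W_eq_INF_transport_cost:
  "d_W Q\<^sub>1 Q\<^sub>2 = enn2real (INF \<gamma> \<in> couplings Q\<^sub>1 Q\<^sub>2. transport_cost \<gamma>)"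
  by (simp add: d_W_def transport_cost_def)

lemma couplings_AE_mem:
  fixes Q\<^sub>1 Q\<^sub>2 :: "'x::euclidean_space measure"
  assumes \<gamma>: "\<gamma> \<in> couplings Q\<^sub>1 Q\<^sub>2" and Q\<^sub>1: "Q\<^sub>1 \<in> distrs_M S" and Q\<^sub>2: "Q\<^sub>2 \<in> distrs_M S"
  shows "AE p in \<gamma>. fst p \<in> S \<and> snd p \<in> S"
proof -
  have "S \<in> sets borel"
    using Q\<^sub>1 by (simp add: distrs_M_def)
  moreover have "AE \<xi> in distr \<gamma> borel fst. \<xi> \<in> S"
    using distrs_M_AE_mem[OF Q\<^sub>1] unfolding couplingsD(3)[OF \<gamma>] .
  moreover have "AE \<xi> in distr \<gamma> borel snd. \<xi> \<in> S"
    using distrs_M_AE_mem[OF Q\<^sub>2] unfolding couplingsD(4)[OF \<gamma>] .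
  ultimately show ?thesis
    using couplingsD(1,2)[OF \<gamma>] by (auto simp: AE_distr_iff)
qed

lemma transport_cost_finite:
  fixes Q\<^sub>1 Q\<^sub>2 :: "'x::euclidean_space measure"
  assumes \<gamma>: "\<gamma> \<in> couplings Q\<^sub>1 Q\<^sub>2" and Q\<^sub>1: "Q\<^sub>1 \<in> distrs_M S" and Q\<^sub>2: "Q\<^sub>2 \<in> distrs_M S"
  shows "transport_cost \<gamma> < \<top>"
proof -
  note \<gamma>_facts = couplingsD[OF \<gamma>]
  have norm_meas: "(\<lambda>\<xi>::'x. ennreal (norm \<xi>)) \<in> borel_measurable borel"
    by measurable
  have "(\<integral>\<^sup>+ \<xi>. ennreal (norm \<xi>) \<partial>Q\<^sub>1) < \<top>" "(\<integral>\<^sup>+ \<xi>. ennreal (norm \<xi>) \<partial>Q\<^sub>2) < \<top>"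
    using Q\<^sub>1 Q\<^sub>2 by (auto simp: distrs_M_def integrable_iff_bounded)
  then have finite: "(\<integral>\<^sup>+ p. ennreal (norm (fst p)) \<partial>\<gamma>) < \<top>" "(\<integral>\<^sup>+ p. ennreal (norm (snd p)) \<partial>\<gamma>) < \<top>"
    using \<gamma>_facts by (simp_all add: nn_integral_distr)
  have "transport_cost \<gamma> \<le> (\<integral>\<^sup>+ p. ennreal (norm (fst p)) + ennreal (norm (snd p)) \<partial>\<gamma>)"
    unfolding transport_cost_def
    by (intro nn_integral_mono) (simp add: norm_triangle_ineq4 flip: ennreal_plus)
  also have "\<dots> = (\<integral>\<^sup>+ p. ennreal (norm (fst p)) \<partial>\<gamma>) + (\<integral>\<^sup>+ p. ennreal (norm (snd p)) \<partial>\<gamma>)"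
    using measurable_compose[OF \<gamma>_facts(1) norm_meas] measurable_compose[OF \<gamma>_facts(2) norm_meas]
    by (intro nn_integral_add) (simp_all add: o_def)
  finally show ?thesis
    using finite by (simp add: top.not_eq_extremum order_le_less_trans)
qed

lemma lipschitz_integral_diff_le_transport_cost:
  fixes f :: "'x::euclidean_space \<Rightarrow> real"
  assumes Q\<^sub>1: "Q\<^sub>1 \<in> distrs_M S" and Q\<^sub>2: "Q\<^sub>2 \<in> distrs_M S" and \<gamma>: "\<gamma> \<in> couplings Q\<^sub>1 Q\<^sub>2"
    and f: "f \<in> borel_measurable borel" and lip: "L-lipschitz_on S f"
  shows "ennreal \<bar>integral\<^sup>L Q\<^sub>1 f - integral\<^sup>L Q\<^sub>2 f\<bar> \<le> ennreal L * transport_cost \<gamma>"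
proof -
  note \<gamma>_facts = couplingsD[OF \<gamma>]
  have integrable: "integrable \<gamma> (\<lambda>p. f (fst p))" "integrable \<gamma> (\<lambda>p. f (snd p))"
    using integrable_lipschitz_on_distrs_M[OF Q\<^sub>1 f lip] integrable_lipschitz_on_distrs_M[OF Q\<^sub>2 f lip]
    by (simp_all add: \<gamma>_facts(3,4) integrable_distr_eq[OF \<gamma>_facts(1) f]
        integrable_distr_eq[OF \<gamma>_facts(2) f])
  have "integral\<^sup>L Q\<^sub>1 f - integral\<^sup>L Q\<^sub>2 f = (\<integral>p. f (fst p) - f (snd p) \<partial>\<gamma>)"
    using integrable by (simp add: \<gamma>_facts(3,4) integral_distr[OF \<gamma>_facts(1) f]
        integral_distr[OF \<gamma>_facts(2) f])
  then have "\<bar>integral\<^sup>L Q\<^sub>1 f - integral\<^sup>L Q\<^sub>2 f\<bar> \<le> (\<integral>p. \<bar>f (fst p) - f (snd p)\<bar> \<partial>\<gamma>)"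
    by (simp only: integral_abs_bound)
  then have "ennreal \<bar>integral\<^sup>L Q\<^sub>1 f - integral\<^sup>L Q\<^sub>2 f\<bar> \<le> (\<integral>\<^sup>+p. ennreal \<bar>f (fst p) - f (snd p)\<bar> \<partial>\<gamma>)"
    using integrable by (simp add: nn_integral_eq_integral ennreal_leI)
  also have "\<dots> \<le> (\<integral>\<^sup>+p. ennreal L * ennreal (norm (fst p - snd p)) \<partial>\<gamma>)"
    using couplings_AE_mem[OF \<gamma> Q\<^sub>1 Q\<^sub>2]
  proof (intro nn_integral_mono_AE, eventually_elim)
    case (elim p)
    then have "\<bar>f (fst p) - f (snd p)\<bar> \<le> L * norm (fst p - snd p)"
      using lipschitz_on_normD[OF lip] by simp
    then show ?case
      using lipschitz_on_nonneg[OF lip] by (simp add: ennreal_leI flip: ennreal_mult)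
  qed
  also have "\<dots> = ennreal L * transport_cost \<gamma>"
  proof -
    have "(\<lambda>\<xi>::'x. ennreal (norm \<xi>)) \<in> borel_measurable borel"
      by measurable
    from measurable_compose[OF borel_measurable_diff[OF \<gamma>_facts(1,2)] this]
    show ?thesis
      unfolding transport_cost_def by (rule nn_integral_cmult)
  qed
  finally show ?thesis .
qed

lemma lipschitz_integral_diff_le_d_W:
  fixes f :: "'x::euclidean_space \<Rightarrow> real"
  assumes Q\<^sub>1: "Q\<^sub>1 \<in> distrs_M S" and Q\<^sub>2: "Q\<^sub>2 \<in> distrs_M S"
    and f: "f \<in> borel_measurable borel" and lip: "L-lipschitz_on S f"
  shows "\<bar>integral\<^sup>L Q\<^sub>1 f - integral\<^sup>L Q\<^sub>2 f\<bar> \<le> L * d_W Q\<^sub>1 Q\<^sub>2"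
proof -
  define \<Delta> where "\<Delta> = \<bar>integral\<^sup>L Q\<^sub>1 f - integral\<^sup>L Q\<^sub>2 f\<bar>"
  define W where "W = (INF \<gamma> \<in> couplings Q\<^sub>1 Q\<^sub>2. transport_cost \<gamma>)"
  have bound: "ennreal \<Delta> \<le> ennreal L * transport_cost \<gamma>" if "\<gamma> \<in> couplings Q\<^sub>1 Q\<^sub>2" for \<gamma>
    unfolding \<Delta>_def using Q\<^sub>1 Q\<^sub>2 that f lip by (rule lipschitz_integral_diff_le_transport_cost)
  have product: "Q\<^sub>1 \<Otimes>\<^sub>M Q\<^sub>2 \<in> couplings Q\<^sub>1 Q\<^sub>2"
    using Q\<^sub>1 Q\<^sub>2 by (rule pair_measure_in_couplings)
  then have "W < \<top>"
    unfolding W_def by (meson INF_lower order.strict_trans1 transport_cost_finite Q\<^sub>1 Q\<^sub>2)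
  show ?thesis
  proof (cases "L = 0")
    case True
    then show ?thesis
      using bound[OF product] by (simp add: \<Delta>_def)
  next
    case False
    then have "L > 0"
      using lipschitz_on_nonneg[OF lip] by simp
    have "ennreal (\<Delta> / L) \<le> transport_cost \<gamma>" if \<gamma>: "\<gamma> \<in> couplings Q\<^sub>1 Q\<^sub>2" for \<gamma>
    proof -
      obtain c where c: "transport_cost \<gamma> = ennreal c" "c \<ge> 0"
        using transport_cost_finite[OF \<gamma> Q\<^sub>1 Q\<^sub>2] by (cases "transport_cost \<gamma>") auto
      then have "\<Delta> \<le> L * c"
        using bound[OF \<gamma>] \<open>L > 0\<close> by (simp add: ennreal_le_iff flip: ennreal_mult)
      then show ?thesis
        using c \<open>L > 0\<close> by (simp add: ennreal_leI divide_le_eq mult.commute)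
    qed
    then have "ennreal (\<Delta> / L) \<le> W"
      unfolding W_def by (rule INF_greatest)
    then have "\<Delta> / L \<le> enn2real W"
      using enn2real_mono[OF _ \<open>W < \<top>\<close>] \<open>L > 0\<close> by (fastforce simp: \<Delta>_def)
    then show ?thesis
      using \<open>L > 0\<close> by (simp add: \<Delta>_def W_def d_W_eq_INF_transport_cost divide_le_eq mult.commute)
  qed
qed

(* A measurable stand-in for deriv f 0: deriv is defined by choice, so xi |-> deriv (G . xi) 0
   need not be measurable, whereas a limit of measurable difference quotients is. *)
definition diff_quotient_lim :: "(real \<Rightarrow> real) \<Rightarrow> real" where
  "diff_quotient_lim f = lim (\<lambda>n. (f (1 / Suc n) - f 0) / (1 / Suc n))"

lemma DERIV_difference_quotient_LIMSEQ:
  assumes "(f has_real_derivative D) (at 0)" and "\<And>n. X n \<noteq> 0" and "X \<longlonglongrightarrow> 0"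
  shows "(\<lambda>n. (f (X n) - f 0) / X n) \<longlonglongrightarrow> D"
proof -
  have "((\<lambda>t. (f (0 + t) - f 0) / t) \<longlongrightarrow> D) (at 0)"
    using assms(1) by (simp add: DERIV_def)
  with assms(2,3) show ?thesis
    unfolding tendsto_at_iff_sequentially by (auto simp: o_def)
qed

lemma diff_quotient_lim_eq:
  assumes "(f has_real_derivative D) (at 0)"
  shows "diff_quotient_lim f = D"
  unfolding diff_quotient_lim_def
  using assms LIMSEQ_Suc[OF lim_const_over_n[of 1]]
  by (intro limI DERIV_difference_quotient_LIMSEQ) auto

lemma borel_measurable_diff_quotient_lim:
  assumes "\<And>t. (\<lambda>\<xi>. G t \<xi>) \<in> borel_measurable M"
  shows "(\<lambda>\<xi>. diff_quotient_lim (\<lambda>t. G t \<xi>)) \<in> borel_measurable M"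
  unfolding diff_quotient_lim_def using assms by measurable

lemma abs_difference_quotient_le:
  fixes f f' :: "real \<Rightarrow> real"
  assumes f_deriv: "\<And>s. \<bar>s\<bar> \<le> \<delta> \<Longrightarrow> (f has_real_derivative f' s) (at s)"
    and f'_bound: "\<And>s. \<bar>s\<bar> \<le> \<delta> \<Longrightarrow> \<bar>f' s\<bar> \<le> B" and t: "\<bar>t\<bar> \<le> \<delta>"
  shows "\<bar>(f t - f 0) / t\<bar> \<le> B"
proof -
  have "norm (f t - f 0) \<le> B * norm (t - 0)"
  proof (rule field_differentiable_bound[where S="{-\<delta>..\<delta>}"])
    fix s :: real
    assume "s \<in> {-\<delta>..\<delta>}"
    then have "\<bar>s\<bar> \<le> \<delta>"
      by auto
    then show "(f has_field_derivative f' s) (at s within {-\<delta>..\<delta>})" and "norm (f' s) \<le> B"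
      using has_field_derivative_at_within[OF f_deriv] f'_bound by simp_all
  qed (use t in auto)
  moreover have "B \<ge> 0"
    using f'_bound[of 0] t by force
  ultimately show ?thesis
    by (cases "t = 0") (simp_all add: abs_divide pos_divide_le_eq)
qed

lemma tendsto_integral_difference_quotient:
  fixes G G' :: "real \<Rightarrow> 'a \<Rightarrow> real"
  assumes S: "AE \<xi> in Q. \<xi> \<in> S" and "\<delta> > 0"
    and G_meas: "\<And>t. G t \<in> borel_measurable Q"
    and G_deriv: "\<And>\<xi> t. \<xi> \<in> S \<Longrightarrow> \<bar>t\<bar> \<le> \<delta> \<Longrightarrow> ((\<lambda>t. G t \<xi>) has_real_derivative G' t \<xi>) (at t)"
    and G'_bound: "\<And>\<xi> t. \<xi> \<in> S \<Longrightarrow> \<bar>t\<bar> \<le> \<delta> \<Longrightarrow> \<bar>G' t \<xi>\<bar> \<le> w \<xi>"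
    and w: "integrable Q w"
  shows "((\<lambda>t. \<integral>\<xi>. (G t \<xi> - G 0 \<xi>) / t \<partial>Q) \<longlongrightarrow> (\<integral>\<xi>. diff_quotient_lim (\<lambda>t. G t \<xi>) \<partial>Q)) (at 0)"
  unfolding tendsto_at_iff_sequentially
proof (intro allI impI)
  fix X :: "nat \<Rightarrow> real"
  assume X: "\<forall>n. X n \<in> UNIV - {0}" "X \<longlonglongrightarrow> 0"
  then obtain N where "\<forall>n\<ge>N. norm (X n - 0) < \<delta>"
    using \<open>\<delta> > 0\<close> unfolding LIMSEQ_iff by blast
  then have N: "\<bar>X (n + N)\<bar> \<le> \<delta>" for n
    by (simp add: less_imp_le)
  have "(\<lambda>n. \<integral>\<xi>. (G (X (n + N)) \<xi> - G 0 \<xi>) / X (n + N) \<partial>Q)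
      \<longlonglongrightarrow> (\<integral>\<xi>. diff_quotient_lim (\<lambda>t. G t \<xi>) \<partial>Q)"
  proof (rule integral_dominated_convergence[OF _ _ w])
    show "(\<lambda>\<xi>. diff_quotient_lim (\<lambda>t. G t \<xi>)) \<in> borel_measurable Q"
      using G_meas by (rule borel_measurable_diff_quotient_lim)
    show "(\<lambda>\<xi>. (G (X (n + N)) \<xi> - G 0 \<xi>) / X (n + N)) \<in> borel_measurable Q" for n
      using G_meas by measurable
    show "AE \<xi> in Q. (\<lambda>n. (G (X (n + N)) \<xi> - G 0 \<xi>) / X (n + N))
        \<longlonglongrightarrow> diff_quotient_lim (\<lambda>t. G t \<xi>)"
      using S
    proof eventually_elim
      case (elim \<xi>)
      have "((\<lambda>t. G t \<xi>) has_real_derivative G' 0 \<xi>) (at 0)"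
        using G_deriv[OF elim] \<open>\<delta> > 0\<close> by simp
      from DERIV_difference_quotient_LIMSEQ[OF this] diff_quotient_lim_eq[OF this]
      show ?case
        using X LIMSEQ_ignore_initial_segment[OF X(2)] by simp
    qed
    show "AE \<xi> in Q. norm ((G (X (n + N)) \<xi> - G 0 \<xi>) / X (n + N)) \<le> w \<xi>" for n
      using S
    proof eventually_elim
      case (elim \<xi>)
      show ?case
        using abs_difference_quotient_le[OF G_deriv[OF elim] G'_bound[OF elim] N] by simp
    qed
  qed
  then show "((\<lambda>t. \<integral>\<xi>. (G t \<xi> - G 0 \<xi>) / t \<partial>Q) \<circ> X)
      \<longlonglongrightarrow> (\<integral>\<xi>. diff_quotient_lim (\<lambda>t. G t \<xi>) \<partial>Q)"
    by (simp add: o_def LIMSEQ_offset)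
qed

lemma has_real_derivative_integral_dominated:
  fixes G G' :: "real \<Rightarrow> 'a \<Rightarrow> real"
  assumes S: "AE \<xi> in Q. \<xi> \<in> S" and "\<delta> > 0"
    and G_meas: "\<And>t. G t \<in> borel_measurable Q"
    and G_int: "\<And>t. \<bar>t\<bar> \<le> \<delta> \<Longrightarrow> integrable Q (G t)"
    and G_deriv: "\<And>\<xi> t. \<xi> \<in> S \<Longrightarrow> \<bar>t\<bar> \<le> \<delta> \<Longrightarrow> ((\<lambda>t. G t \<xi>) has_real_derivative G' t \<xi>) (at t)"
    and G'_bound: "\<And>\<xi> t. \<xi> \<in> S \<Longrightarrow> \<bar>t\<bar> \<le> \<delta> \<Longrightarrow> \<bar>G' t \<xi>\<bar> \<le> w \<xi>"
    and w: "integrable Q w"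
  shows "((\<lambda>t. \<integral>\<xi>. G t \<xi> \<partial>Q) has_real_derivative (\<integral>\<xi>. diff_quotient_lim (\<lambda>t. G t \<xi>) \<partial>Q)) (at 0)"
proof -
  have "\<forall>\<^sub>F t in at 0. \<bar>t\<bar> \<le> \<delta>"
    using \<open>\<delta> > 0\<close> by (auto simp: eventually_at dist_real_def intro!: exI[of _ \<delta>])
  then have "\<forall>\<^sub>F t in at 0. (\<integral>\<xi>. (G t \<xi> - G 0 \<xi>) / t \<partial>Q)
      = ((\<integral>\<xi>. G (0 + t) \<xi> \<partial>Q) - (\<integral>\<xi>. G 0 \<xi> \<partial>Q)) / t"
  proof eventually_elim
    case (elim t)
    show ?case
      using G_int[OF elim] G_int[of 0] \<open>\<delta> > 0\<close>
      by (simp add: integral_divide_zero Bochner_Integration.integral_diff)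
  qed
  with tendsto_integral_difference_quotient[OF assms(1-3) G_deriv G'_bound w]
  show ?thesis
    unfolding DERIV_def by (rule Lim_transform_eventually)
qed

lemma upd_add_scaleR: "upd z i (z $ i + t *\<^sub>R e) = z + t *\<^sub>R upd 0 i e"
  by (simp add: upd_def vec_eq_iff)

lemma pderiv_ij_eq_deriv_line:
  "pderiv_ij g i j z = deriv (\<lambda>t. g (z + t *\<^sub>R upd 0 i (axis j 1))) 0"
  unfolding pderiv_ij_def upd_add_scaleR ..

lemma pderiv_ij_along_line:
  fixes g :: "real^'n^'i \<Rightarrow> real" and i :: 'i and j :: 'n
  assumes "C1_on_UNIV (\<lambda>y. g (upd x i y))"
  defines "c \<equiv> upd 0 i (axis j 1)"
  shows "((\<lambda>t. g (x + t *\<^sub>R c)) has_real_derivative pderiv_ij g i j (x + t *\<^sub>R c)) (at t)"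
    and "continuous_on UNIV (\<lambda>t. pderiv_ij g i j (x + t *\<^sub>R c))"
proof -
  define e :: "real^'n" where "e = axis j 1"
  obtain D where D: "\<And>y. ((\<lambda>y. g (upd x i y)) has_derivative (\<lambda>v. D y \<bullet> v)) (at y)"
    and D_cont: "continuous_on UNIV D"
    using assms(1) by (auto simp: C1_on_UNIV_def)
  have line_deriv: "((\<lambda>t. g (x + t *\<^sub>R c)) has_real_derivative D (x $ i + s *\<^sub>R e) \<bullet> e) (at s)" for s
  proof -
    have "((\<lambda>y. g (upd x i y)) \<circ> (\<lambda>t. x $ i + t *\<^sub>R e) has_derivative
        (\<lambda>v. D (x $ i + s *\<^sub>R e) \<bullet> v) \<circ> (\<lambda>t. t *\<^sub>R e)) (at s)"
      by (intro diff_chain_at D derivative_eq_intros) auto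
    then show ?thesis
      by (intro has_derivative_imp_has_field_derivative) (simp_all add: o_def upd_add_scaleR c_def e_def)
  qed
  have pderiv: "pderiv_ij g i j (x + s *\<^sub>R c) = D (x $ i + s *\<^sub>R e) \<bullet> e" for s
  proof -
    have "pderiv_ij g i j (x + s *\<^sub>R c) = deriv (\<lambda>t. g (x + (s + t) *\<^sub>R c)) 0"
      by (simp add: pderiv_ij_eq_deriv_line c_def scaleR_add_left add.assoc)
    also have "\<dots> = deriv (\<lambda>t. g (x + t *\<^sub>R c)) s"
      by (simp add: deriv_shift_0[of _ s] o_def)
    also have "\<dots> = D (x $ i + s *\<^sub>R e) \<bullet> e"
      by (rule DERIV_imp_deriv[OF line_deriv])
    finally show ?thesis .
  qed
  show "((\<lambda>t. g (x + t *\<^sub>R c)) has_real_derivative pderiv_ij g i j (x + t *\<^sub>R c)) (at t)"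
    unfolding pderiv by (rule line_deriv)
  show "continuous_on UNIV (\<lambda>t. pderiv_ij g i j (x + t *\<^sub>R c))"
    unfolding pderiv
    by (intro continuous_intros continuous_on_compose2[OF D_cont]) auto
qed

lemma open_contains_line_segment:
  fixes x c :: "'a::real_normed_vector"
  assumes "open V" and "x \<in> V"
  obtains \<delta> where "\<delta> > 0" and "\<And>t. \<bar>t\<bar> \<le> \<delta> \<Longrightarrow> x + t *\<^sub>R c \<in> V"
proof -
  obtain r where "r > 0" and r: "ball x r \<subseteq> V"
    using assms open_contains_ball by blast
  have "norm c + 1 > 0"
    using norm_ge_zero[of c] by linarith
  define \<delta> where "\<delta> = r / (norm c + 1)"
  have "x + t *\<^sub>R c \<in> V" if "\<bar>t\<bar> \<le> \<delta>" for t
  proof -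
    have "norm (t *\<^sub>R c) \<le> \<delta> * norm c"
      using that by (simp add: mult_right_mono)
    also have "\<dots> < r"
      using \<open>r > 0\<close> \<open>norm c + 1 > 0\<close> by (simp add: \<delta>_def pos_divide_less_eq)
    finally show ?thesis
      using r by (auto simp: dist_norm)
  qed
  moreover have "\<delta> > 0"
    using \<open>r > 0\<close> \<open>norm c + 1 > 0\<close> by (simp add: \<delta>_def)
  ultimately show thesis
    using that by blast
qed

lemma pderiv_ij_integral:
  fixes g :: "real^'n^'i \<Rightarrow> 'x::euclidean_space \<Rightarrow> real" and i :: 'i and j :: 'n
  assumes "open V" and "x \<in> V"
    and g_meas: "\<And>z. g z \<in> borel_measurable borel"
    and g_C1: "\<And>\<xi>. \<xi> \<in> S \<Longrightarrow> C1_on_UNIV (\<lambda>y. g (upd x i y) \<xi>)"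
    and g_lip: "\<And>z. z \<in> V \<Longrightarrow> L-lipschitz_on S (\<lambda>\<xi>. pderiv_ij (\<lambda>w. g w \<xi>) i j z)"
    and Q: "Q \<in> distrs_M S" and g_int: "\<And>z. z \<in> V \<Longrightarrow> integrable Q (g z)"
  defines "c \<equiv> upd 0 i (axis j 1)"
  shows "pderiv_ij (\<lambda>z. \<integral>\<xi>. g z \<xi> \<partial>Q) i j x = (\<integral>\<xi>. diff_quotient_lim (\<lambda>t. g (x + t *\<^sub>R c) \<xi>) \<partial>Q)"
proof -
  interpret prob_space Q
    using Q by (simp add: distrs_M_def)
  have sets_Q: "sets Q = sets borel" and norm_Q: "integrable Q norm"
    using Q by (auto simp: distrs_M_def)
  obtain \<xi>\<^sub>0 where \<xi>\<^sub>0: "\<xi>\<^sub>0 \<in> S"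
    using Q by (force simp: distrs_M_def)
  obtain \<delta> where "\<delta> > 0" and line_in_V: "\<And>t. \<bar>t\<bar> \<le> \<delta> \<Longrightarrow> x + t *\<^sub>R c \<in> V"
    using open_contains_line_segment[OF \<open>open V\<close> \<open>x \<in> V\<close>] by blast
  define G' where "G' t \<xi> = pderiv_ij (\<lambda>w. g w \<xi>) i j (x + t *\<^sub>R c)" for t \<xi>
  have G_deriv: "((\<lambda>t. g (x + t *\<^sub>R c) \<xi>) has_real_derivative G' t \<xi>) (at t)" if "\<xi> \<in> S" for \<xi> t
    unfolding G'_def c_def by (rule pderiv_ij_along_line(1)[OF g_C1[OF that]])
  have "continuous_on {-\<delta>..\<delta>} (\<lambda>t. G' t \<xi>\<^sub>0)"
    unfolding G'_def c_def
    using continuous_on_subset[OF pderiv_ij_along_line(2)[OF g_C1[OF \<xi>\<^sub>0]]] by blast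
  then obtain B where B: "\<And>t. t \<in> {-\<delta>..\<delta>} \<Longrightarrow> \<bar>G' t \<xi>\<^sub>0\<bar> \<le> B"
    using continuous_on_compact_bound[OF compact_Icc] by (metis real_norm_def)
  define w where "w \<xi> = B + L * (norm \<xi> + norm \<xi>\<^sub>0)" for \<xi> :: 'x
  have G'_bound: "\<bar>G' t \<xi>\<bar> \<le> w \<xi>" if "\<xi> \<in> S" and t: "\<bar>t\<bar> \<le> \<delta>" for \<xi> t
  proof -
    have "L-lipschitz_on S (\<lambda>\<xi>. G' t \<xi>)"
      unfolding G'_def using g_lip[OF line_in_V[OF t]] .
    moreover have "\<bar>G' t \<xi>\<^sub>0\<bar> \<le> B"
      using B t by (simp add: abs_le_iff)
    ultimately show ?thesis
      using lipschitz_on_abs_le[OF _ \<open>\<xi> \<in> S\<close> \<xi>\<^sub>0] unfolding w_def by fastforce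
  qed
  have "((\<lambda>t. \<integral>\<xi>. g (x + t *\<^sub>R c) \<xi> \<partial>Q) has_real_derivative
      (\<integral>\<xi>. diff_quotient_lim (\<lambda>t. g (x + t *\<^sub>R c) \<xi>) \<partial>Q)) (at 0)"
  proof (rule has_real_derivative_integral_dominated[OF distrs_M_AE_mem[OF Q] \<open>\<delta> > 0\<close>])
    show "(\<lambda>\<xi>. g (x + t *\<^sub>R c) \<xi>) \<in> borel_measurable Q" for t
      using g_meas by (simp add: measurable_cong_sets[OF sets_Q refl])
    show "integrable Q (\<lambda>\<xi>. g (x + t *\<^sub>R c) \<xi>)" if "\<bar>t\<bar> \<le> \<delta>" for t
      using g_int[OF line_in_V[OF that]] by simp
    show "integrable Q w"
      unfolding w_def using norm_Q by (intro Bochner_Integration.integrable_add integrable_mult_right) auto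
  qed (use G_deriv G'_bound in auto)
  then show ?thesis
    unfolding pderiv_ij_eq_deriv_line c_def by (rule DERIV_imp_deriv)
qed

lemma abs_pderiv_ij_integral_diff_le:
  fixes g :: "real^'n^'i \<Rightarrow> 'x::euclidean_space \<Rightarrow> real" and i :: 'i and j :: 'n
  assumes "open V" and "x \<in> V"
    and g_meas: "\<And>z. g z \<in> borel_measurable borel"
    and g_C1: "\<And>\<xi>. \<xi> \<in> S \<Longrightarrow> C1_on_UNIV (\<lambda>y. g (upd x i y) \<xi>)"
    and g_lip: "\<And>z. z \<in> V \<Longrightarrow> L-lipschitz_on S (\<lambda>\<xi>. pderiv_ij (\<lambda>w. g w \<xi>) i j z)"
    and E: "E \<in> distrs_M S" and Q\<^sub>1: "Q\<^sub>1 \<in> distrs_M S" and Q\<^sub>2: "Q\<^sub>2 \<in> distrs_M S"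
    and g_int: "\<And>z. z \<in> V \<Longrightarrow> integrable Q\<^sub>1 (g z) \<and> integrable Q\<^sub>2 (g z)"
  shows "\<bar>pderiv_ij (\<lambda>z. \<integral>\<xi>. g z \<xi> \<partial>Q\<^sub>1) i j x - pderiv_ij (\<lambda>z. \<integral>\<xi>. g z \<xi> \<partial>Q\<^sub>2) i j x\<bar>
    \<le> L * (d_W E Q\<^sub>1 + d_W E Q\<^sub>2)"
proof -
  define f where "f \<xi> = diff_quotient_lim (\<lambda>t. g (x + t *\<^sub>R upd 0 i (axis j 1)) \<xi>)" for \<xi>
  have f_meas: "f \<in> borel_measurable borel"
    unfolding f_def using g_meas by (rule borel_measurable_diff_quotient_lim)
  have "f \<xi> = pderiv_ij (\<lambda>w. g w \<xi>) i j x" if "\<xi> \<in> S" for \<xi>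
    unfolding f_def using pderiv_ij_along_line(1)[OF g_C1[OF that], of j 0]
    by (intro diff_quotient_lim_eq) simp
  then have f_lip: "L-lipschitz_on S f"
    using g_lip[OF \<open>x \<in> V\<close>] by (simp add: lipschitz_on_def)
  have "pderiv_ij (\<lambda>z. \<integral>\<xi>. g z \<xi> \<partial>Q\<^sub>k) i j x = integral\<^sup>L Q\<^sub>k f"
    if "Q\<^sub>k \<in> distrs_M S" "\<And>z. z \<in> V \<Longrightarrow> integrable Q\<^sub>k (g z)" for Q\<^sub>k
    unfolding f_def using assms(1-5) that by (rule pderiv_ij_integral)
  then have "\<bar>pderiv_ij (\<lambda>z. \<integral>\<xi>. g z \<xi> \<partial>Q\<^sub>1) i j x - pderiv_ij (\<lambda>z. \<integral>\<xi>. g z \<xi> \<partial>Q\<^sub>2) i j x\<bar>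
      \<le> \<bar>integral\<^sup>L E f - integral\<^sup>L Q\<^sub>1 f\<bar> + \<bar>integral\<^sup>L E f - integral\<^sup>L Q\<^sub>2 f\<bar>"
    using Q\<^sub>1 Q\<^sub>2 g_int by simp
  also have "\<dots> \<le> L * d_W E Q\<^sub>1 + L * d_W E Q\<^sub>2"
    using E Q\<^sub>1 Q\<^sub>2 f_meas f_lip by (intro add_mono lipschitz_integral_diff_le_d_W)
  finally show ?thesis
    by (simp add: distrib_left)
qed

lemma norm_squared_le_sum_of_component_bounds:
  fixes v :: "real^'n^'i"
  assumes "\<And>i j. \<bar>v $ i $ j\<bar> \<le> b i j"
  shows "(norm v)\<^sup>2 \<le> (\<Sum>i\<in>UNIV. \<Sum>j\<in>UNIV. (b i j)\<^sup>2)"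
proof -
  have "(norm v)\<^sup>2 = (\<Sum>i\<in>UNIV. \<Sum>j\<in>UNIV. \<bar>v $ i $ j\<bar>\<^sup>2)"
    unfolding power2_norm_eq_inner by (simp add: inner_vec_def power2_eq_square)
  also have "\<dots> \<le> (\<Sum>i\<in>UNIV. \<Sum>j\<in>UNIV. (b i j)\<^sup>2)"
    using assms by (intro sum_mono power_mono) auto
  finally show ?thesis .
qed

theorem lemma6:
  fixes h :: "'i::finite \<Rightarrow> real^'n^'i \<Rightarrow> 'x::euclidean_space \<Rightarrow> real"
    and X :: "'i \<Rightarrow> (real^'n) set"
    and Xi :: "'i \<Rightarrow> 'x set"
    and P :: "'i \<Rightarrow> 'x measure"
    and K :: "'i \<Rightarrow> nat"
    and samples :: "'i \<Rightarrow> nat \<Rightarrow> 'x"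
    and epsf :: "'i \<Rightarrow> nat \<Rightarrow> real \<Rightarrow> real"
    and \<beta> :: "'i \<Rightarrow> real"
    and L :: "'i \<Rightarrow> 'n \<Rightarrow> real"
    and V :: "(real^'n^'i) set"
    and q :: "'i \<Rightarrow> 'x measure"
    and x :: "real^'n^'i"
  defines "XX \<equiv> {z. \<forall>i. z $ i \<in> X i}"
  assumes meas: "\<And>i z. h i z \<in> borel_measurable borel"
    and C1: "\<And>i z \<xi>. (\<forall>k. k \<noteq> i \<longrightarrow> z $ k \<in> X k) \<Longrightarrow> \<xi> \<in> Xi i \<Longrightarrow>
               C1_on_UNIV (\<lambda>y. h i (upd z i y) \<xi>)"
    and compact: "\<And>i. compact (X i)"
    and convex: "\<And>i. convex (X i)"
    and cvx_h: "\<And>i z \<xi>. (\<forall>k. k \<noteq> i \<longrightarrow> z $ k \<in> X k) \<Longrightarrow> \<xi> \<in> Xi i \<Longrightarrow>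
               convex_on UNIV (\<lambda>y. h i (upd z i y) \<xi>)"
    and P_M: "\<And>i. P i \<in> distrs_M (Xi i)"
    and K_pos: "\<And>i. K i > 0"
    and samples_in: "\<And>i k. k < K i \<Longrightarrow> samples i k \<in> Xi i"
    and eps_nonneg: "\<And>i. epsf i (K i) (\<beta> i) \<ge> 0"
    and light_tail: "\<And>i. \<exists>a>1. \<forall>Q \<in> wball (Xi i) (epsf i (K i) (\<beta> i)) (empirical (K i) (samples i)).
               integrable Q (\<lambda>\<xi>. exp (norm \<xi> powr a))"
    and L_nonneg: "\<And>i j. L i j \<ge> 0"
    and Lip: "\<And>i j z \<xi> \<xi>'. z \<in> XX \<Longrightarrow> \<xi> \<in> Xi i \<Longrightarrow> \<xi>' \<in> Xi i \<Longrightarrow>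
               \<bar>pderiv_ij (\<lambda>w. h i w \<xi>) i j z - pderiv_ij (\<lambda>w. h i w \<xi>') i j z\<bar> \<le> L i j * norm (\<xi> - \<xi>')"
    and integr: "\<And>i z Q. z \<in> XX \<Longrightarrow>
               Q \<in> wball (Xi i) (epsf i (K i) (\<beta> i)) (empirical (K i) (samples i)) \<or> Q = P i \<Longrightarrow>
               integrable Q (h i z)"
    and V_open: "open V"
    and V_sub: "V \<subseteq> XX"
    and x_in: "x \<in> V"
    and q_in: "\<And>i. q i \<in> wball (Xi i) (epsf i (K i) (\<beta> i)) (empirical (K i) (samples i))"
  shows "(norm (Fmap h q x - Fmap h P x))\<^sup>2 \<le>
           (\<Sum>i\<in>UNIV. \<Sum>j\<in>UNIV. (L i j)\<^sup>2 *
              (epsf i (K i) (\<beta> i) + d_W (empirical (K i) (samples i)) (P i))\<^sup>2)"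
proof -
  have component_bound: "\<bar>(Fmap h q x - Fmap h P x) $ i $ j\<bar>
      \<le> L i j * (epsf i (K i) (\<beta> i) + d_W (empirical (K i) (samples i)) (P i))" for i j
  proof -
    let ?E = "empirical (K i) (samples i)"
    have q: "q i \<in> distrs_M (Xi i)" "d_W ?E (q i) \<le> epsf i (K i) (\<beta> i)"
      using q_in[of i] by (auto simp: wball_def)
    have "\<bar>Fmap h q x $ i $ j - Fmap h P x $ i $ j\<bar> \<le> L i j * (d_W ?E (q i) + d_W ?E (P i))"
      unfolding Fmap_def vec_lambda_beta
    proof (rule abs_pderiv_ij_integral_diff_le[OF V_open x_in meas[of i] _ _ _ q(1) P_M[of i]])
      show "C1_on_UNIV (\<lambda>y. h i (upd x i y) \<xi>)" if "\<xi> \<in> Xi i" for \<xi>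
        using C1 V_sub x_in that by (auto simp: XX_def)
      show "lipschitz_on (L i j) (Xi i) (\<lambda>\<xi>. pderiv_ij (\<lambda>w. h i w \<xi>) i j z)" if "z \<in> V" for z
        using Lip[of z] V_sub that L_nonneg by (auto intro!: lipschitz_onI simp: dist_norm)
      show "?E \<in> distrs_M (Xi i)"
        using K_pos samples_in P_M[of i] by (intro empirical_in_distrs_M) (auto simp: distrs_M_def)
      show "integrable (q i) (h i z) \<and> integrable (P i) (h i z)" if "z \<in> V" for z
        using integr q_in V_sub that by blast
    qed
    then show ?thesis
      using mult_left_mono[OF q(2) L_nonneg[of i j]] by (simp add: distrib_left)
  qed
  from norm_squared_le_sum_of_component_bounds[of "Fmap h q x - Fmap h P x", OF component_bound]
  show ?thesis
    by (simp add: power_mult_distrib)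
qed

end
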